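(* Let $G=G(k,m,P)$ be a random intersection graph with set sizes $X_1,\dots,X_k$. For any integers $x_1,\dots,x_k$ such that the event $B=\{X_1=x_1,\dots,X_k=x_k\}$ has positive probability, $$\mathbb P\big(G\text{ has a rainbow }K_k\,\big|\,B\big)\le m^{-k(k-1)/2}(x_1x_2\cdots x_k)^{k-1}.$$
   Context: Random intersection graph: given positive integers $k,m$ and a probability measure $P$ on $\{0,\dots,m\}$, $G(k,m,P)$ has vertex set $[k]$ and attribute set $W$ with $|W|=m$; independent random subsets $S_1,\dots,S_k\subseteq W$ with $\mathbb P(S_v=S)=P(|S|)/\binom{m}{|S|}$; distinct $u,v$ adjacent iff $S_u\cap S_v\ne\emptyset$; $X_v=|S_v|$. "$G$ has a rainbow $K_k$" means there is an injective assignment of attributes to the $\binom k2$ pairs of vertices such that the attribute assigned to each pair $\{u,v\}$ lies in $S_u\cap S_v$. *)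

theory Defs
  imports "HOL-Probability.Probability"
begin

text \<open>Distribution of a single random attribute set S_v in G(k,m,P):
  P(S_v = S) = P(|S|) / binom(m, |S|) for S a subset of the attribute set W (|W| = m).
  (This is a genuine pmf whenever W is finite with |W| = m and P is supported on {0..m}.)\<close>
definition rig_set_pmf :: "'a set \<Rightarrow> nat pmf \<Rightarrow> 'a set pmf" where
  "rig_set_pmf W P = embed_pmf (\<lambda>S. if S \<subseteq> W then pmf P (card S) / real (card W choose card S) else 0)"

definition rig_pmf :: "nat \<Rightarrow> 'a set \<Rightarrow> nat pmf \<Rightarrow> (nat \<Rightarrow> 'a set) pmf" where
  "rig_pmf k W P = Pi_pmf {..<k} {} (\<lambda>_. rig_set_pmf W P)"

text \<open>The graph on vertices {0..<k} given by the sets S has a rainbow K_k: an injective assignment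
  of attributes to the pairs {u,v} (encoded as (u,v) with u < v < k) with the attribute of {u,v}
  lying in S u \<inter> S v.\<close>
definition rainbow_clique :: "nat \<Rightarrow> (nat \<Rightarrow> 'a set) \<Rightarrow> bool" where
  "rainbow_clique k S \<longleftrightarrow>
     (\<exists>f :: nat \<times> nat \<Rightarrow> 'a. inj_on f {(u, v). u < v \<and> v < k} \<and>
        (\<forall>u v. u < v \<and> v < k \<longrightarrow> f (u, v) \<in> S u \<inter> S v))"

end

theory Submission
  imports Defs
begin

text \<open>Given the sizes \<open>x\<^sub>v\<close>, a rainbow \<open>K\<^sub>k\<close> is witnessed by an injective map \<open>f\<close>
  from the \<open>N = k(k-1)/2\<close> pairs into \<open>W\<close> such that each \<open>S\<^sub>v\<close> contains the \<open>k - 1\<close>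
  attributes \<open>f\<close> puts on the pairs at \<open>v\<close>. For fixed \<open>f\<close> these events are independent
  over \<open>v\<close>, and a uniform \<open>x\<close>-subset of an \<open>m\<close>-set contains a fixed \<open>t\<close>-set with
  probability \<open>x(x-1)\<cdots>(x-t+1) / (m(m-1)\<cdots>(m-t+1)) \<le> (x/m)^t\<close>. A union bound over
  the at most \<open>m^N\<close> maps \<open>f\<close> gives \<open>m^N \<Prod>\<^sub>v (x\<^sub>v/m)^(k-1) = (\<Prod>\<^sub>v x\<^sub>v)^(k-1) / m^N\<close>.\<close>

lemma binomial_shift_mult_le:
  fixes m x t :: nat
  assumes "t \<le> x" "x \<le> m"
  shows "real (m - t choose (x - t)) * real m ^ t \<le> real (m choose x) * real x ^ t"
  using assms
proof (induction t)
  case 0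
  then show ?case by simp
next
  case (Suc t)
  define n where "n = m - Suc t"
  define j where "j = x - Suc t"
  have mt: "m - t = Suc n" and xt: "x - t = Suc j"
    using Suc.prems by (auto simp: n_def j_def)
  have IH: "real (Suc n choose Suc j) * real m ^ t \<le> real (m choose x) * real x ^ t"
    using Suc by (simp add: mt xt)
  have absorb: "real (Suc n) * real (n choose j) = real (Suc n choose Suc j) * real (Suc j)"
    using Suc_times_binomial_eq[of n j] by (metis of_nat_mult)
  have ratio: "real (Suc j) * real m \<le> real x * real (Suc n)"
  proof -
    have "real (Suc j) = real x - real t" "real (Suc n) = real m - real t"
      using mt xt Suc.prems by (simp_all add: of_nat_diff[symmetric])
    moreover have "real t * real x \<le> real t * real m"
      using Suc.prems by (intro mult_left_mono) auto
    ultimately show ?thesis by (simp only:) (simp add: algebra_simps)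
  qed
  have "real (Suc n) * (real (n choose j) * real m ^ Suc t)
      = (real (Suc n) * real (n choose j)) * real m * real m ^ t"
    by (simp only: power_Suc mult_ac)
  also have "\<dots> = real (Suc n choose Suc j) * (real (Suc j) * real m) * real m ^ t"
    by (simp only: absorb mult_ac)
  also have "\<dots> \<le> real (Suc n choose Suc j) * (real x * real (Suc n)) * real m ^ t"
    by (intro mult_right_mono mult_left_mono ratio) auto
  also have "\<dots> = real (Suc n) * real x * (real (Suc n choose Suc j) * real m ^ t)"
    by (simp add: mult_ac)
  also have "\<dots> \<le> real (Suc n) * real x * (real (m choose x) * real x ^ t)"
    by (intro mult_left_mono IH) auto
  finally have "real (Suc n) * (real (n choose j) * real m ^ Suc t)
      \<le> real (Suc n) * (real (m choose x) * real x ^ Suc t)"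
    by (simp add: mult_ac)
  then show ?case
    by (simp add: n_def j_def)
qed

lemma card_supersets_of_card:
  assumes "finite W" "T \<subseteq> W" "card T \<le> x"
  shows "card {S. S \<subseteq> W \<and> card S = x \<and> T \<subseteq> S} = (card W - card T) choose (x - card T)"
proof -
  have fin_T: "finite T" using assms finite_subset by blast
  have "bij_betw (\<lambda>S. S - T) {S. S \<subseteq> W \<and> card S = x \<and> T \<subseteq> S}
          {U. U \<subseteq> W - T \<and> card U = x - card T}"
  proof (rule bij_betwI[where g = "\<lambda>U. U \<union> T"])
    show "(\<lambda>U. U \<union> T) \<in> {U. U \<subseteq> W - T \<and> card U = x - card T} \<rightarrow> {S. S \<subseteq> W \<and> card S = x \<and> T \<subseteq> S}"
    proof
      fix U assume U: "U \<in> {U. U \<subseteq> W - T \<and> card U = x - card T}"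
      then have "finite U" using assms finite_subset by blast
      then have "card (U \<union> T) = card U + card T" using U fin_T by (subst card_Un_disjoint) auto
      then show "U \<union> T \<in> {S. S \<subseteq> W \<and> card S = x \<and> T \<subseteq> S}" using U assms by auto
    qed
  qed (use fin_T in \<open>auto simp: card_Diff_subset\<close>)
  then have "card {S. S \<subseteq> W \<and> card S = x \<and> T \<subseteq> S} = card {U. U \<subseteq> W - T \<and> card U = x - card T}"
    by (rule bij_betw_same_card)
  also have "\<dots> = card (W - T) choose (x - card T)"
    using assms by (simp add: n_subsets)
  finally show ?thesis
    using assms fin_T by (simp add: card_Diff_subset)
qed

lemma pmf_rig_set_pmf:
  assumes "finite W" "set_pmf P \<subseteq> {0..card W}"
  shows "pmf (rig_set_pmf W P) S = (if S \<subseteq> W then pmf P (card S) / real (card W choose card S) else 0)"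
proof -
  define f where "f = (\<lambda>S. if S \<subseteq> W then pmf P (card S) / real (card W choose card S) else 0)"
  have "(\<Sum>S\<in>Pow W. f S) = (\<Sum>j\<in>{0..card W}. \<Sum>S\<in>{S. S \<in> Pow W \<and> card S = j}. f S)"
    by (rule sum.group[symmetric]) (auto simp: assms(1) card_mono)
  also have "\<dots> = (\<Sum>j\<in>{0..card W}. pmf P j)"
  proof (rule sum.cong[OF refl])
    fix j assume "j \<in> {0..card W}"
    then show "(\<Sum>S\<in>{S. S \<in> Pow W \<and> card S = j}. f S) = pmf P j"
      using n_subsets[OF assms(1), of j] by (simp add: f_def)
  qed
  also have "\<dots> = 1"
    by (rule sum_pmf_eq_1) (use assms(2) in auto)
  finally have "(\<integral>\<^sup>+S. ennreal (f S) \<partial>count_space UNIV) = 1"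
    by (subst nn_integral_count_space'[where A = "Pow W"])
       (auto simp: assms(1) f_def sum_ennreal[symmetric])
  then show ?thesis
    unfolding rig_set_pmf_def f_def[symmetric] by (subst pmf_embed_pmf) (auto simp: f_def)
qed

lemma set_pmf_rig_set_pmf:
  assumes "finite W" "set_pmf P \<subseteq> {0..card W}"
  shows "set_pmf (rig_set_pmf W P) \<subseteq> Pow W"
  by (auto simp: set_pmf_eq pmf_rig_set_pmf[OF assms] split: if_splits)

lemma prob_rig_set_pmf_card:
  assumes "finite W" "set_pmf P \<subseteq> {0..card W}"
  shows "measure_pmf.prob (rig_set_pmf W P) {S. card S = x} = pmf P x"
proof -
  have "measure_pmf.prob (rig_set_pmf W P) {S. card S = x}
      = measure_pmf.prob (rig_set_pmf W P) {S. S \<subseteq> W \<and> card S = x}"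
    using set_pmf_rig_set_pmf[OF assms]
    by (intro measure_prob_cong_0) (auto simp: set_pmf_eq)
  also have "\<dots> = (\<Sum>S\<in>{S. S \<subseteq> W \<and> card S = x}. pmf P x / real (card W choose x))"
    using assms(1) by (subst measure_measure_pmf_finite) (auto simp: pmf_rig_set_pmf[OF assms])
  also have "\<dots> = real (card W choose x) * (pmf P x / real (card W choose x))"
    using n_subsets[OF assms(1), of x] by simp
  also have "\<dots> = pmf P x"
    using assms(2) by (cases "x \<le> card W") (auto simp: set_pmf_eq)
  finally show ?thesis .
qed

lemma prob_rig_set_pmf_superset_le:
  assumes "finite W" "set_pmf P \<subseteq> {0..card W}" "T \<subseteq> W" "card W > 0"
  shows "measure_pmf.prob (rig_set_pmf W P) {S. card S = x \<and> T \<subseteq> S}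
           \<le> (real x / real (card W)) ^ card T * pmf P x"
proof (cases "card T \<le> x \<and> x \<le> card W")
  case False
  have "card T \<le> card S \<and> card S \<le> card W" if "S \<in> set_pmf (rig_set_pmf W P)" "T \<subseteq> S" for S
    using set_pmf_rig_set_pmf[OF assms(1,2)] that assms(1)
    by (meson PowD card_mono rev_finite_subset subsetD)
  then have "measure_pmf.prob (rig_set_pmf W P) {S. card S = x \<and> T \<subseteq> S} = 0"
    using False by (intro measure_pmf_zero_iff[THEN iffD2]) auto
  then show ?thesis by simp
next
  case True
  define m where "m = card W"
  have "measure_pmf.prob (rig_set_pmf W P) {S. card S = x \<and> T \<subseteq> S}
      = measure_pmf.prob (rig_set_pmf W P) {S. S \<subseteq> W \<and> card S = x \<and> T \<subseteq> S}"
    using set_pmf_rig_set_pmf[OF assms(1,2)]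
    by (intro measure_prob_cong_0) (auto simp: set_pmf_eq)
  also have "\<dots> = (\<Sum>S\<in>{S. S \<subseteq> W \<and> card S = x \<and> T \<subseteq> S}. pmf P x / real (m choose x))"
    using assms(1) by (subst measure_measure_pmf_finite) (auto simp: pmf_rig_set_pmf[OF assms(1,2)] m_def)
  also have "\<dots> = real (m - card T choose (x - card T)) / real (m choose x) * pmf P x"
    using card_supersets_of_card[OF assms(1,3), of x] True by (simp add: m_def)
  also have "\<dots> \<le> (real x / real m) ^ card T * pmf P x"
  proof (rule mult_right_mono)
    have "real (m choose x) > 0" "real m > 0"
      using True assms(4) by (simp_all add: m_def)
    then show "real (m - card T choose (x - card T)) / real (m choose x) \<le> (real x / real m) ^ card T"
      using binomial_shift_mult_le[of "card T" x m] True
      by (simp add: m_def field_simps)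
  qed simp
  finally show ?thesis by (simp add: m_def)
qed

definition clique_pairs :: "nat \<Rightarrow> (nat \<times> nat) set" where
  "clique_pairs k = {(u, v). u < v \<and> v < k}"

definition pair_attrs :: "nat \<Rightarrow> (nat \<times> nat \<Rightarrow> 'a) \<Rightarrow> nat \<Rightarrow> 'a set" where
  "pair_attrs k f v = (\<lambda>u. f (min u v, max u v)) ` ({..<k} - {v})"

lemma finite_clique_pairs: "finite (clique_pairs k)"
  by (rule finite_subset[of _ "{..<k} \<times> {..<k}"]) (auto simp: clique_pairs_def)

lemma double_card_clique_pairs: "2 * card (clique_pairs k) = k * (k - 1)"
proof (induction k)
  case 0
  then show ?case by (simp add: clique_pairs_def)
next
  case (Suc k)
  have "clique_pairs (Suc k) = clique_pairs k \<union> (\<lambda>u. (u, k)) ` {..<k}"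
    by (auto simp: clique_pairs_def)
  moreover have "card (clique_pairs k \<union> (\<lambda>u. (u, k)) ` {..<k})
      = card (clique_pairs k) + card ((\<lambda>u. (u, k)) ` {..<k})"
    by (rule card_Un_disjoint[OF finite_clique_pairs]) (auto simp: clique_pairs_def)
  moreover have "card ((\<lambda>u. (u, k)) ` {..<k}) = k"
    by (subst card_image) (auto simp: inj_on_def)
  ultimately have "card (clique_pairs (Suc k)) = card (clique_pairs k) + k"
    by simp
  then show ?case
    using Suc.IH by (cases k) (auto simp: algebra_simps)
qed

lemma card_clique_pairs: "card (clique_pairs k) = k * (k - 1) div 2"
  using double_card_clique_pairs[of k] by simp

lemma min_max_in_clique_pairs:
  "u < k \<Longrightarrow> v < k \<Longrightarrow> u \<noteq> v \<Longrightarrow> (min u v, max u v) \<in> clique_pairs k"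
  by (auto simp: clique_pairs_def min_def max_def)

lemma pair_attrs_subset:
  assumes "f \<in> clique_pairs k \<rightarrow> W" "v < k"
  shows "pair_attrs k f v \<subseteq> W"
  using assms min_max_in_clique_pairs by (fastforce simp: pair_attrs_def)

lemma card_pair_attrs:
  assumes "inj_on f (clique_pairs k)" "v < k"
  shows "card (pair_attrs k f v) = k - 1"
proof -
  have "inj_on (\<lambda>u. f (min u v, max u v)) ({..<k} - {v})"
  proof (rule inj_onI)
    fix u u' assume u: "u \<in> {..<k} - {v}" and u': "u' \<in> {..<k} - {v}"
      and "f (min u v, max u v) = f (min u' v, max u' v)"
    then have "(min u v, max u v) = (min u' v, max u' v)"
      using assms min_max_in_clique_pairs by (auto dest: inj_onD)
    then show "u = u'"
      using u u' by (auto simp: min_def max_def split: if_splits)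
  qed
  then have "card (pair_attrs k f v) = card ({..<k} - {v})"
    unfolding pair_attrs_def by (rule card_image)
  then show ?thesis
    using assms(2) by simp
qed

lemma rainbow_clique_obtain_pair_attrs:
  assumes "rainbow_clique k S" "\<And>v. v < k \<Longrightarrow> S v \<subseteq> W"
  obtains f where "f \<in> clique_pairs k \<rightarrow>\<^sub>E W" "inj_on f (clique_pairs k)"
    "\<And>v. v < k \<Longrightarrow> pair_attrs k f v \<subseteq> S v"
proof -
  obtain g where g: "inj_on g (clique_pairs k)"
    "\<And>u v. u < v \<Longrightarrow> v < k \<Longrightarrow> g (u, v) \<in> S u \<inter> S v"
    using assms(1) by (auto simp: rainbow_clique_def clique_pairs_def)
  define f where "f = restrict g (clique_pairs k)"
  have "f \<in> clique_pairs k \<rightarrow>\<^sub>E W"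
    using g(2) assms(2) by (fastforce simp: f_def clique_pairs_def)
  moreover have "inj_on f (clique_pairs k)"
    using g(1) by (simp add: f_def inj_on_def)
  moreover have "pair_attrs k f v \<subseteq> S v" if "v < k" for v
  proof
    fix a assume "a \<in> pair_attrs k f v"
    then obtain u where u: "u < k" "u \<noteq> v" "a = f (min u v, max u v)"
      by (auto simp: pair_attrs_def)
    then have "a = g (min u v, max u v)"
      using min_max_in_clique_pairs[OF u(1) that u(2)] by (simp add: f_def)
    then show "a \<in> S v"
      using g(2)[of "min u v" "max u v"] u that by (cases "u < v") (auto simp: min_def max_def)
  qed
  ultimately show ?thesis using that by blast
qed

lemma prob_rig_pmf_Pi:
  "measure_pmf.prob (rig_pmf k W P) (Pi {..<k} E) = (\<Prod>v<k. measure_pmf.prob (rig_set_pmf W P) (E v))"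
  unfolding rig_pmf_def by (rule measure_Pi_pmf_Pi) simp

lemma set_pmf_rig_pmf:
  assumes "finite W" "set_pmf P \<subseteq> {0..card W}" "S \<in> set_pmf (rig_pmf k W P)" "v < k"
  shows "S v \<subseteq> W"
  using assms set_pmf_rig_set_pmf[OF assms(1,2)] by (auto simp: rig_pmf_def set_Pi_pmf PiE_dflt_def)

lemma prob_rig_pmf_card:
  assumes "finite W" "set_pmf P \<subseteq> {0..card W}"
  shows "measure_pmf.prob (rig_pmf k W P) {S. \<forall>v<k. card (S v) = n v} = (\<Prod>v<k. pmf P (n v))"
proof -
  have event: "{S. \<forall>v<k. card (S v) = n v} = Pi {..<k} (\<lambda>v. {T. card T = n v})"
    by auto
  show ?thesis
    by (simp only: event prob_rig_pmf_Pi prob_rig_set_pmf_card[OF assms])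
qed

lemma prob_rainbow_clique_card_le:
  assumes "finite W" "card W > 0" "set_pmf P \<subseteq> {0..card W}"
  shows "measure_pmf.prob (rig_pmf k W P) ({S. rainbow_clique k S} \<inter> {S. \<forall>v<k. card (S v) = n v})
    \<le> real (card W) ^ card (clique_pairs k) * (\<Prod>v<k. (real (n v) / real (card W)) ^ (k - 1) * pmf P (n v))"
    (is "measure_pmf.prob ?\<mu> ?R \<le> _ * ?c")
proof -
  define F where "F = {f \<in> clique_pairs k \<rightarrow>\<^sub>E W. inj_on f (clique_pairs k)}"
  define A where "A f = Pi {..<k} (\<lambda>v. {T. card T = n v \<and> pair_attrs k f v \<subseteq> T})"
    for f :: "nat \<times> nat \<Rightarrow> 'a"
  have cover: "?R \<inter> set_pmf ?\<mu> \<subseteq> (\<Union>f\<in>F. A f)"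
  proof
    fix S assume S: "S \<in> ?R \<inter> set_pmf ?\<mu>"
    have "S v \<subseteq> W" if "v < k" for v
      using set_pmf_rig_pmf[OF assms(1,3)] S that by blast
    moreover from S have "rainbow_clique k S" by simp
    ultimately obtain f where "f \<in> clique_pairs k \<rightarrow>\<^sub>E W" "inj_on f (clique_pairs k)"
      "\<And>v. v < k \<Longrightarrow> pair_attrs k f v \<subseteq> S v"
      using rainbow_clique_obtain_pair_attrs by metis
    then have "f \<in> F" "S \<in> A f"
      using S by (auto simp: F_def A_def)
    then show "S \<in> (\<Union>f\<in>F. A f)" by blast
  qed
  have prob_A: "measure_pmf.prob ?\<mu> (A f) \<le> ?c" if "f \<in> F" for f
    unfolding A_def prob_rig_pmf_Pi
  proof (rule prod_mono, rule conjI)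
    fix v assume v: "v \<in> {..<k}"
    have f: "f \<in> clique_pairs k \<rightarrow> W" "inj_on f (clique_pairs k)"
      using that by (auto simp: F_def PiE_def)
    have "pair_attrs k f v \<subseteq> W"
      using f(1) v by (intro pair_attrs_subset) auto
    moreover have "card (pair_attrs k f v) = k - 1"
      using f(2) v by (intro card_pair_attrs) auto
    ultimately show "measure_pmf.prob (rig_set_pmf W P) {T. card T = n v \<and> pair_attrs k f v \<subseteq> T}
        \<le> (real (n v) / real (card W)) ^ (k - 1) * pmf P (n v)"
      using prob_rig_set_pmf_superset_le[OF assms(1,3) _ assms(2), of "pair_attrs k f v" "n v"]
      by simp
  qed simp
  have card_F: "card F \<le> card W ^ card (clique_pairs k)"
  proof -
    have "card F \<le> card (clique_pairs k \<rightarrow>\<^sub>E W)"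
      unfolding F_def by (rule card_mono) (auto intro!: finite_PiE finite_clique_pairs assms(1))
    then show ?thesis
      by (simp add: card_PiE finite_clique_pairs)
  qed
  have "measure_pmf.prob ?\<mu> ?R = measure_pmf.prob ?\<mu> (?R \<inter> set_pmf ?\<mu>)"
    by (simp add: measure_Int_set_pmf)
  also have "\<dots> \<le> measure_pmf.prob ?\<mu> (\<Union>f\<in>F. A f)"
    using cover by (rule measure_pmf.finite_measure_mono) simp
  also have "\<dots> \<le> (\<Sum>f\<in>F. measure_pmf.prob ?\<mu> (A f))"
    by (rule measure_pmf.finite_measure_subadditive_finite)
       (auto simp: F_def intro!: finite_subset[OF _ finite_PiE[OF finite_clique_pairs assms(1)]])
  also have "\<dots> \<le> real (card F) * ?c"
    using sum_mono[OF prob_A] by simp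
  also have "\<dots> \<le> real (card W) ^ card (clique_pairs k) * ?c"
    using card_F by (intro mult_right_mono prod_nonneg) (auto simp flip: of_nat_power)
  finally show ?thesis .
qed

lemma prob_rainbow_clique_card_le_prob_card:
  fixes k :: nat and n :: "nat \<Rightarrow> nat"
  assumes "finite W" "card W > 0" "set_pmf P \<subseteq> {0..card W}"
  defines "B \<equiv> {S. \<forall>v<k. card (S v) = n v}"
  shows "measure_pmf.prob (rig_pmf k W P) ({S. rainbow_clique k S} \<inter> B)
    \<le> (\<Prod>v<k. real (n v)) ^ (k - 1) / real (card W) ^ (k * (k - 1) div 2) * measure_pmf.prob (rig_pmf k W P) B"
proof -
  define N where "N = card (clique_pairs k)"
  have "(\<Prod>v<k. (real (n v) / real (card W)) ^ (k - 1) * pmf P (n v))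
      = (\<Prod>v<k. real (n v)) ^ (k - 1) / real (card W) ^ (N + N) * (\<Prod>v<k. pmf P (n v))"
    unfolding N_def mult_2[symmetric] double_card_clique_pairs
    by (simp add: prod.distrib prod_power_distrib prod_dividef power_divide power_mult[symmetric] mult.commute)
  then have "real (card W) ^ N * (\<Prod>v<k. (real (n v) / real (card W)) ^ (k - 1) * pmf P (n v))
      = (\<Prod>v<k. real (n v)) ^ (k - 1) / real (card W) ^ N * (\<Prod>v<k. pmf P (n v))"
    using assms(2) by (simp add: power_add)
  then show ?thesis
    using prob_rainbow_clique_card_le[OF assms(1-3), of k n]
    by (simp add: B_def prob_rig_pmf_card[OF assms(1,3)] N_def card_clique_pairs)
qed

theorem mainTheorem15:
  fixes k m :: nat and W :: "'a set" and P :: "nat pmf" and x :: "nat \<Rightarrow> int"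
  assumes "k > 0" and "m > 0"
    and "finite W" and "card W = m"
    and "set_pmf P \<subseteq> {0..m}"
  defines "B \<equiv> {S :: nat \<Rightarrow> 'a set. \<forall>v<k. int (card (S v)) = x v}"
  assumes "measure_pmf.prob (rig_pmf k W P) B > 0"
  shows "measure_pmf.prob (rig_pmf k W P) ({S. rainbow_clique k S} \<inter> B)
           / measure_pmf.prob (rig_pmf k W P) B
         \<le> (\<Prod>v<k. real_of_int (x v)) ^ (k - 1) / real m ^ (k * (k - 1) div 2)"
proof -
  obtain S0 where "S0 \<in> B"
    using assms(7) by (metis measure_empty less_irrefl equals0I)
  then have x_nonneg: "x v \<ge> 0" if "v < k" for v
    using that by (auto simp: B_def)
  define n where "n v = nat (x v)" for v
  have "B = {S. \<forall>v<k. card (S v) = n v}"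
    using x_nonneg by (auto simp: B_def n_def)
  moreover have "(\<Prod>v<k. real_of_int (x v)) = (\<Prod>v<k. real (n v))"
    using x_nonneg by (intro prod.cong) (auto simp: n_def)
  ultimately show ?thesis
    using prob_rainbow_clique_card_le_prob_card[of W P k n] assms(2-7)
    by (simp add: pos_divide_le_eq)
qed

end
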